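(* Let $q_1,q_2,q_3,q_4\in\widehat{\mathbb H}$ be four distinct points and let $q'_1,q'_2,q'_3\in\widehat{\mathbb H}$ be three distinct points. Then the set $$S=\{\pi(\gamma)(q_4):\gamma\in GL(2,\mathbb H),\ \pi(\gamma)(q_n)=q'_n,\ n=1,2,3\}\subset\widehat{\mathbb H}$$ is either a 2-sphere, a 2-plane, or a single point. Moreover, $S$ is a single point if and only if $Q(q_1,q_2,q_3,q_4)$ is real.
   Context: $\mathbb H$ denotes the quaternions, $\widehat{\mathbb H}=\mathbb H\cup\{\infty\}$, identified with $\mathbb R^4$ plus a point at infinity (2-spheres and 2-planes are meant in $\mathbb H\cong\mathbb R^4$). $GL(2,\mathbb H)$ acts on $\widehat{\mathbb H}$ by $\pi(\gamma)(q)=(aq+b)(cq+d)^{-1}$ for $\gamma=\begin{pmatrix}a&b\\c&d\end{pmatrix}$. For four distinct points the cross-ratio is $Q(q_1,q_2,q_3,q_4)=(q_2-q_1)^{-1}(q_4-q_1)(q_4-q_3)^{-1}(q_2-q_3)$, defined by taking limits if some $q_n=\infty$. *)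

theory Defs
  imports "HOL-Analysis.Analysis"
begin

text \<open>Quaternions via Cayley--Dickson: the pair (a,b) of complex numbers stands for
  a + b j.  Writing a = x0 + x1 i, b = x2 + x3 i gives q = x0 + x1 i + x2 j + x3 k, so the
  Euclidean structure of complex \<times> complex is exactly that of R^4 = H.\<close>

type_synonym quat = "complex \<times> complex"

definition qmul :: "quat \<Rightarrow> quat \<Rightarrow> quat" where
  "qmul p q = (fst p * fst q - snd p * cnj (snd q), fst p * snd q + snd p * cnj (fst q))"

definition qinv :: "quat \<Rightarrow> quat" where
  "qinv q = (let n = complex_of_real ((cmod (fst q))\<^sup>2 + (cmod (snd q))\<^sup>2)
             in (cnj (fst q) / n, - snd q / n))"

definition qone :: quat where "qone = (1, 0)"

definition is_real_quat :: "quat \<Rightarrow> bool" where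
  "is_real_quat q \<longleftrightarrow> snd q = 0 \<and> Im (fst q) = 0"

datatype hq = Fin quat | Inf

text \<open>2x2 quaternionic matrices (a,b,c,d) = [[a,b],[c,d]].\<close>
type_synonym qmat = "quat \<times> quat \<times> quat \<times> quat"

definition qmat_mul :: "qmat \<Rightarrow> qmat \<Rightarrow> qmat" where
  "qmat_mul M N = (case M of (a,b,c,d) \<Rightarrow> case N of (e,f,g,h) \<Rightarrow>
     (qmul a e + qmul b g, qmul a f + qmul b h, qmul c e + qmul d g, qmul c f + qmul d h))"

definition qmat_id :: qmat where "qmat_id = (qone, 0, 0, qone)"

definition GL2H :: "qmat set" where
  "GL2H = {M. \<exists>N. qmat_mul M N = qmat_id \<and> qmat_mul N M = qmat_id}"

fun mobius :: "qmat \<Rightarrow> hq \<Rightarrow> hq" where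
  "mobius (a,b,c,d) (Fin q) =
     (if qmul c q + d = 0 then Inf else Fin (qmul (qmul a q + b) (qinv (qmul c q + d))))"
| "mobius (a,b,c,d) Inf = (if c = 0 then Inf else Fin (qmul a (qinv c)))"

text \<open>Cross-ratio Q(q1,q2,q3,q4) = (q2-q1)^{-1}(q4-q1)(q4-q3)^{-1}(q2-q3), with the
  limiting values when one point is infinity (for q2 the limit along real q2).\<close>
fun crossratio :: "hq \<Rightarrow> hq \<Rightarrow> hq \<Rightarrow> hq \<Rightarrow> quat" where
  "crossratio (Fin q1) (Fin q2) (Fin q3) (Fin q4) =
     qmul (qmul (qmul (qinv (q2 - q1)) (q4 - q1)) (qinv (q4 - q3))) (q2 - q3)"
| "crossratio Inf (Fin q2) (Fin q3) (Fin q4) = qmul (qinv (q4 - q3)) (q2 - q3)"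
| "crossratio (Fin q1) Inf (Fin q3) (Fin q4) = qmul (q4 - q1) (qinv (q4 - q3))"
| "crossratio (Fin q1) (Fin q2) Inf (Fin q4) = qmul (qinv (q2 - q1)) (q4 - q1)"
| "crossratio (Fin q1) (Fin q2) (Fin q3) Inf = qmul (qinv (q2 - q1)) (q2 - q3)"
| "crossratio _ _ _ _ = undefined"

definition is_2sphere :: "hq set \<Rightarrow> bool" where
  "is_2sphere S \<longleftrightarrow> (\<exists>c r A. 0 < r \<and> affine A \<and> aff_dim A = 3 \<and> c \<in> A \<and>
                        S = Fin ` (sphere c r \<inter> A))"

definition is_2plane :: "hq set \<Rightarrow> bool" where
  "is_2plane S \<longleftrightarrow> (\<exists>P. affine P \<and> aff_dim P = 2 \<and> S = insert Inf (Fin ` P))"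

end

theory Submission
  imports Defs
begin

text \<open>Choose Moebius maps \<open>G\<close> and \<open>H\<close> sending \<open>(0, \<infinity>, 1)\<close> to \<open>(p1, p2, p3)\<close> and to
  \<open>(q1, q2, q3)\<close>, and write \<open>q4 = H w\<close>. A Moebius map fixing \<open>0\<close>, \<open>\<infinity>\<close> and \<open>1\<close> is an
  inner automorphism \<open>x \<mapsto> a x a\<^sup>-\<^sup>1\<close>, so \<open>S\<close> is the image under \<open>G\<close> of the conjugacy class
  of \<open>w\<close>. For real \<open>w\<close> this class is \<open>{w}\<close>; otherwise it is the round 2-sphere of all quaternions
  with the real part and the norm of \<open>w\<close>, and \<open>G\<close>, being composed of similarities and
  \<open>x \<mapsto> x\<^sup>-\<^sup>1\<close>, maps it to a 2-sphere or a 2-plane. Finally \<open>Q(q1, q2, q3, q4) = w (w - 1)\<^sup>-\<^sup>1\<close>,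
  which is real exactly when \<open>w\<close> is.\<close>

section \<open>Division rings and real algebras\<close>

lemma mult_inverse_cancel_left: "(a::'a::division_ring) \<noteq> 0 \<Longrightarrow> a * (inverse a * b) = b"
  by (simp flip: mult.assoc)

lemma inverse_mult_cancel_left: "(a::'a::division_ring) \<noteq> 0 \<Longrightarrow> inverse a * (a * b) = b"
  by (simp flip: mult.assoc)

lemma division_ring_inverse_diff':
  "(a::'a::division_ring) \<noteq> 0 \<Longrightarrow> b \<noteq> 0 \<Longrightarrow> inverse a - inverse b = inverse b * (b - a) * inverse a"
  by (simp add: algebra_simps mult_inverse_cancel_left mult.assoc)

lemma ratio_mult_right:
  fixes w b :: "'a::division_ring"
  assumes "w \<noteq> 1" "b \<noteq> 0"
  shows "(w * b) * inverse ((w - 1) * b) = w * inverse (w - 1)"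
  using assms by (simp add: nonzero_inverse_mult_distrib mult.assoc mult_inverse_cancel_left)

lemma of_real_mult_commute: "of_real r * x = x * (of_real r :: 'a::real_algebra_1)"
  by (simp add: of_real_def)

lemma mult_inverse_diff_one_in_Reals_iff:
  fixes w :: "'a::real_div_algebra"
  assumes "w \<noteq> 1"
  shows "w * inverse (w - 1) \<in> \<real> \<longleftrightarrow> w \<in> \<real>"
proof -
  have w1: "w - 1 \<noteq> 0" using assms by simp
  have "w * inverse (w - 1) = ((w - 1) + 1) * inverse (w - 1)" by simp
  also have "\<dots> = 1 + inverse (w - 1)" by (simp only: distrib_right right_inverse[OF w1] mult_1_left)
  finally have "w * inverse (w - 1) = 1 + inverse (w - 1)" .
  then have "w * inverse (w - 1) \<in> \<real> \<longleftrightarrow> inverse (w - 1) \<in> \<real>"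
    by (metis Reals_1 Reals_add Reals_diff add_diff_cancel_left')
  also have "\<dots> \<longleftrightarrow> w - 1 \<in> \<real>"
    by (metis Reals_inverse inverse_inverse_eq)
  also have "\<dots> \<longleftrightarrow> w \<in> \<real>"
    by (metis Reals_1 Reals_add Reals_diff diff_add_cancel)
  finally show ?thesis .
qed

lemma of_real_conjugate:
  fixes a :: "'a::real_div_algebra"
  shows "a \<noteq> 0 \<Longrightarrow> a * of_real r * inverse a = of_real r"
  by (simp add: mult.assoc flip: of_real_mult_commute[of r a])

lemma norm_conjugate:
  fixes a :: "'a::real_normed_div_algebra"
  shows "a \<noteq> 0 \<Longrightarrow> norm (a * x * inverse a) = norm x"
  by (simp add: norm_mult norm_inverse)


section \<open>Round spheres of codimension two\<close>

definition codim2_sphere :: "'a::euclidean_space set \<Rightarrow> bool" where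
  "codim2_sphere X \<longleftrightarrow>
     (\<exists>c r A. 0 < r \<and> affine A \<and> aff_dim A = int DIM('a) - 1 \<and> c \<in> A \<and> X = sphere c r \<inter> A)"

lemma codim2_sphereE:
  fixes X :: "'a::euclidean_space set"
  assumes "codim2_sphere X"
  obtains c r n where "r > 0" "n \<noteq> 0" "X = sphere c r \<inter> {x. n \<bullet> x = n \<bullet> c}"
proof -
  obtain c r A where h: "0 < r" "affine A" "aff_dim A = int DIM('a) - 1" "c \<in> A" "X = sphere c r \<inter> A"
    using assms unfolding codim2_sphere_def by blast
  obtain n \<beta> where n: "n \<noteq> 0" "affine hull A = {x. n \<bullet> x = \<beta>}"
    using h(3) aff_dim_eq_hyperplane[of A] by auto
  have A: "A = {x. n \<bullet> x = \<beta>}" using n(2) h(2) by (metis affine_hull_eq)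
  then have "\<beta> = n \<bullet> c" using h(4) by simp
  then show ?thesis using that[of r n c] h A n by simp
qed

lemma dist_eq_iff_inner:
  fixes a y :: "'a::real_inner"
  shows "dist a y = t \<longleftrightarrow> t \<ge> 0 \<and> y \<bullet> y - 2 * (a \<bullet> y) + a \<bullet> a = t\<^sup>2"
proof -
  have "(dist a y)\<^sup>2 = y \<bullet> y - 2 * (a \<bullet> y) + a \<bullet> a"
    by (simp add: dist_norm power2_norm_eq_inner inner_diff_left inner_diff_right inner_commute)
  then show ?thesis by (metis zero_le_dist power2_eq_iff_nonneg)
qed

lemma quadric_eq_sphere:
  fixes b y :: "'a::real_inner"
  assumes a: "a \<noteq> 0" and e: "a * e \<le> b \<bullet> b"
  shows "a * (y \<bullet> y) - 2 * (b \<bullet> y) + e = 0 \<longleftrightarrow>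
    y \<in> sphere (inverse a *\<^sub>R b) (sqrt (b \<bullet> b - a * e) / \<bar>a\<bar>)"
proof -
  have "(sqrt (b \<bullet> b - a * e) / \<bar>a\<bar>)\<^sup>2 = (b \<bullet> b - a * e) / a\<^sup>2"
    using e by (simp add: power_divide)
  then have "y \<in> sphere (inverse a *\<^sub>R b) (sqrt (b \<bullet> b - a * e) / \<bar>a\<bar>) \<longleftrightarrow>
      y \<bullet> y - 2 * (inverse a * (b \<bullet> y)) + inverse a * inverse a * (b \<bullet> b) = (b \<bullet> b - a * e) / a\<^sup>2"
    using e by (simp add: dist_eq_iff_inner inner_commute mult.assoc)
  also have "\<dots> \<longleftrightarrow> a * (a * (y \<bullet> y) - 2 * (b \<bullet> y) + e) = 0"
    using a by (simp add: field_simps power2_eq_square)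
  also have "\<dots> \<longleftrightarrow> a * (y \<bullet> y) - 2 * (b \<bullet> y) + e = 0"
    using a by simp
  finally show ?thesis ..
qed

text \<open>Pythagoras for the foot \<open>p\<close> of the perpendicular from \<open>c\<close> to a hyperplane.\<close>
lemma hyperplane_foot:
  fixes \<nu> c :: "'a::real_inner" and \<beta> :: real
  assumes "\<nu> \<noteq> 0"
  defines "p \<equiv> c + ((\<beta> - \<nu> \<bullet> c) / (\<nu> \<bullet> \<nu>)) *\<^sub>R \<nu>"
  shows "\<nu> \<bullet> p = \<beta>" and "\<nu> \<bullet> y = \<beta> \<Longrightarrow> (dist c y)\<^sup>2 = (dist p y)\<^sup>2 + (dist p c)\<^sup>2"
proof -
  show pH: "\<nu> \<bullet> p = \<beta>" using assms by (simp add: p_def inner_add_right)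
  assume "\<nu> \<bullet> y = \<beta>"
  then have "\<nu> \<bullet> (y - p) = 0" using pH by (simp add: inner_diff_right)
  moreover have "p - c = ((\<beta> - \<nu> \<bullet> c) / (\<nu> \<bullet> \<nu>)) *\<^sub>R \<nu>" by (simp add: p_def)
  ultimately have "orthogonal (y - p) (p - c)"
    unfolding orthogonal_def by (metis inner_commute inner_scaleR_right mult_zero_right)
  moreover have "y - c = (y - p) + (p - c)" by simp
  ultimately have "(norm (y - c))\<^sup>2 = (norm (y - p))\<^sup>2 + (norm (p - c))\<^sup>2"
    by (metis norm_add_Pythagorean)
  then show "(dist c y)\<^sup>2 = (dist p y)\<^sup>2 + (dist p c)\<^sup>2" by (simp add: dist_norm norm_minus_commute)
qed

lemma sphere_Int_hyperplane_codim2_sphere: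
  fixes \<nu> c ya yb :: "'a::euclidean_space"
  assumes \<nu>: "\<nu> \<noteq> 0" and y: "ya \<in> sphere c r \<inter> {y. \<nu> \<bullet> y = \<beta>}" "yb \<in> sphere c r \<inter> {y. \<nu> \<bullet> y = \<beta>}"
    and "ya \<noteq> yb"
  shows "codim2_sphere (sphere c r \<inter> {y. \<nu> \<bullet> y = \<beta>})"
proof -
  define p where "p = c + ((\<beta> - \<nu> \<bullet> c) / (\<nu> \<bullet> \<nu>)) *\<^sub>R \<nu>"
  note foot = hyperplane_foot[OF \<nu>, where c=c and \<beta>=\<beta>, folded p_def]
  define \<rho> where "\<rho> = sqrt (r\<^sup>2 - (dist p c)\<^sup>2)"
  have r: "r \<ge> 0" using y(1) by auto
  have "\<nu> \<bullet> ya = \<beta>" using y(1) by simp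
  from foot(2)[OF this] have "r\<^sup>2 = (dist p ya)\<^sup>2 + (dist p c)\<^sup>2" using y(1) by simp
  then have rc: "r\<^sup>2 - (dist p c)\<^sup>2 \<ge> 0" using zero_le_power2[of "dist p ya"] by linarith
  have "dist c y = r \<longleftrightarrow> dist p y = \<rho>" if "\<nu> \<bullet> y = \<beta>" for y
  proof -
    have "dist c y = r \<longleftrightarrow> (dist c y)\<^sup>2 = r\<^sup>2" using r by (simp add: power2_eq_iff_nonneg)
    also have "\<dots> \<longleftrightarrow> (dist p y)\<^sup>2 = r\<^sup>2 - (dist p c)\<^sup>2" using foot(2)[OF that] by auto
    also have "\<dots> \<longleftrightarrow> dist p y = \<rho>"
      unfolding \<rho>_def using rc by (metis real_sqrt_pow2 real_sqrt_unique zero_le_dist)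
    finally show ?thesis .
  qed
  then have eq: "sphere c r \<inter> {y. \<nu> \<bullet> y = \<beta>} = sphere p \<rho> \<inter> {y. \<nu> \<bullet> y = \<beta>}" by auto
  have "\<rho> > 0"
  proof (rule ccontr)
    assume "\<not> \<rho> > 0"
    moreover have "ya \<in> sphere p \<rho>" "yb \<in> sphere p \<rho>" using eq y by auto
    ultimately show False using \<open>ya \<noteq> yb\<close> by auto
  qed
  then show ?thesis unfolding codim2_sphere_def eq
    using foot(1) \<nu> by (intro exI[of _ p] exI[of _ \<rho>] exI[of _ "{y. \<nu> \<bullet> y = \<beta>}"])
      (simp add: affine_hyperplane)
qed

locale similarity =
  fixes L :: "'a::euclidean_space \<Rightarrow> 'a" and s :: real
  assumes linear: "linear L" and norm_image: "\<And>x. norm (L x) = s * norm x" and pos: "s > 0"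
begin

lemma inj: "inj L"
proof (rule injI)
  fix x y assume "L x = L y"
  then have "s * norm (x - y) = 0" using linear by (simp flip: norm_image add: linear_diff)
  then show "x = y" using pos by simp
qed

lemma surj: "surj L"
  using linear inj linear_injective_imp_surjective by blast

lemma image_eq: "(\<lambda>x. L x + e) ` P = (+) e ` (L ` P)"
  by (auto simp: image_image add.commute)

lemma affine_image:
  assumes "affine P"
  shows "affine ((\<lambda>x. L x + e) ` P)"
proof -
  have "L ` P = affine hull (L ` P)"
    using assms linear by (metis affine_hull_eq affine_hull_linear_image linear_conv_bounded_linear)
  then have "affine (L ` P)" by (metis affine_affine_hull)
  then show ?thesis unfolding image_eq using affine_translation by blast
qed

lemma aff_dim_image: "aff_dim ((\<lambda>x. L x + e) ` P) = aff_dim P"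
  unfolding image_eq aff_dim_translation_eq using linear inj by simp

lemma sphere_image: "(\<lambda>x. L x + e) ` sphere c r = sphere (L c + e) (s * r)"
proof -
  have d: "dist (L c + e) (L x + e) = s * dist c x" for x
    using linear by (simp add: dist_norm norm_image flip: linear_diff)
  show ?thesis
  proof (intro equalityI subsetI)
    fix y assume "y \<in> (\<lambda>x. L x + e) ` sphere c r"
    then show "y \<in> sphere (L c + e) (s * r)" using d by auto
  next
    fix y assume y: "y \<in> sphere (L c + e) (s * r)"
    obtain x where "y = L x + e" using surj by (metis diff_add_cancel surjD)
    then show "y \<in> (\<lambda>x. L x + e) ` sphere c r" using y d pos by auto
  qed
qed

lemma codim2_sphere_image: "codim2_sphere X \<Longrightarrow> codim2_sphere ((\<lambda>x. L x + e) ` X)"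
proof -
  assume "codim2_sphere X"
  then obtain c r A where h: "0 < r" "affine A" "aff_dim A = int DIM('a) - 1" "c \<in> A"
    "X = sphere c r \<inter> A"
    unfolding codim2_sphere_def by blast
  have inj': "inj (\<lambda>x. L x + e)" using inj by (auto simp: inj_def)
  have "(\<lambda>x. L x + e) ` X = sphere (L c + e) (s * r) \<inter> (\<lambda>x. L x + e) ` A"
    unfolding h(5) image_Int[OF inj'] sphere_image ..
  then show ?thesis unfolding codim2_sphere_def using h pos
    by (intro exI[of _ "L c + e"] exI[of _ "s * r"] exI[of _ "(\<lambda>x. L x + e) ` A"])
      (simp add: affine_image aff_dim_image)
qed

end

definition inversion :: "'a::real_inner \<Rightarrow> 'a" where "inversion x = inverse ((norm x)\<^sup>2) *\<^sub>R x"

lemma inversion_eq_0_iff [simp]: "inversion x = 0 \<longleftrightarrow> x = 0"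
  by (simp add: inversion_def)

lemma inversion_inversion [simp]: "inversion (inversion x) = x"
  by (cases "x = 0") (simp_all add: inversion_def power2_eq_square field_simps)

lemma mem_inversion_image_Diff_0: "y \<in> inversion ` (T - {0}) \<longleftrightarrow> y \<noteq> 0 \<and> inversion y \<in> T"
  by (auto intro: image_eqI[of y inversion "inversion y"])

lemma inversion_mem_sphere_Int_hyperplane_iff:
  fixes c n y :: "'a::real_inner"
  assumes r: "r > 0" and y: "y \<noteq> 0"
  shows "inversion y \<in> sphere c r \<inter> {x. n \<bullet> x = n \<bullet> c} \<longleftrightarrow>
    (c \<bullet> c - r\<^sup>2) * (y \<bullet> y) - 2 * (c \<bullet> y) + 1 = 0 \<and> n \<bullet> y = (n \<bullet> c) * (y \<bullet> y)"
proof -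
  define N where "N = y \<bullet> y"
  have N: "N > 0" using y by (simp add: N_def)
  have iy: "inversion y = inverse N *\<^sub>R y" by (simp add: inversion_def N_def power2_norm_eq_inner)
  have "inversion y \<in> sphere c r \<longleftrightarrow>
      inverse N * inverse N * N - 2 * (inverse N * (c \<bullet> y)) + c \<bullet> c = r\<^sup>2"
    using r by (simp add: dist_eq_iff_inner[of c] iy N_def inner_commute mult.assoc)
  also have "\<dots> \<longleftrightarrow> (c \<bullet> c - r\<^sup>2) * N - 2 * (c \<bullet> y) + 1 = 0"
    using N by (simp add: field_simps)
  finally have "inversion y \<in> sphere c r \<longleftrightarrow> (c \<bullet> c - r\<^sup>2) * N - 2 * (c \<bullet> y) + 1 = 0" .
  moreover have "n \<bullet> inversion y = n \<bullet> c \<longleftrightarrow> n \<bullet> y = (n \<bullet> c) * N"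
    using N by (simp add: iy field_simps)
  ultimately show ?thesis by (simp add: N_def)
qed

lemma dim_orthogonal_pair:
  fixes c n :: "'a::euclidean_space"
  assumes c: "c \<noteq> 0" and n: "n \<noteq> 0" and cn: "c \<bullet> n = 0"
  shows "dim {y. c \<bullet> y = 0 \<and> n \<bullet> y = 0} + 2 = DIM('a)"
proof -
  have V: "{y \<in> UNIV. \<forall>x \<in> span {c, n}. orthogonal x y} = {y. c \<bullet> y = 0 \<and> n \<bullet> y = 0}"
  proof (intro set_eqI iffI)
    fix y assume "y \<in> {y \<in> UNIV. \<forall>x \<in> span {c, n}. orthogonal x y}"
    then show "y \<in> {y. c \<bullet> y = 0 \<and> n \<bullet> y = 0}" by (simp add: span_base orthogonal_def)
  next
    fix y assume y: "y \<in> {y. c \<bullet> y = 0 \<and> n \<bullet> y = 0}"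
    have "orthogonal y x" if "x \<in> span {c, n}" for x
      by (rule orthogonal_to_span[OF that]) (use y in \<open>auto simp: orthogonal_def inner_commute\<close>)
    then show "y \<in> {y \<in> UNIV. \<forall>x \<in> span {c, n}. orthogonal x y}" by (simp add: orthogonal_commute)
  qed
  have cnd: "c \<noteq> n" using c cn by auto
  have ind: "independent {c, n}"
    by (rule pairwise_orthogonal_independent)
      (use c n cn cnd in \<open>auto simp: pairwise_def orthogonal_def inner_commute\<close>)
  then have d2: "dim (span {c, n}) = 2" using dim_span_eq_card_independent[OF ind] cnd by simp
  have "dim {y \<in> UNIV. \<forall>x \<in> span {c, n}. orthogonal x y} + dim (span {c, n}) = dim (UNIV :: 'a set)"
    by (rule dim_subspace_orthogonal_to_vectors) auto
  then show ?thesis using V d2 by simp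
qed

lemma inversion_codim2_sphere_through_0:
  fixes c n :: "'a::euclidean_space"
  assumes r: "r > 0" and n: "n \<noteq> 0" and z: "0 \<in> sphere c r \<inter> {x. n \<bullet> x = n \<bullet> c}"
  shows "affine (inversion ` (sphere c r \<inter> {x. n \<bullet> x = n \<bullet> c} - {0}))"
    and "aff_dim (inversion ` (sphere c r \<inter> {x. n \<bullet> x = n \<bullet> c} - {0})) = int DIM('a) - 2"
proof -
  have cc: "c \<bullet> c = r\<^sup>2" using z dist_eq_iff_inner[of c 0 r] by simp
  have m: "n \<bullet> c = 0" using z by simp
  have c0: "c \<noteq> 0" using cc r by auto
  let ?U = "inversion ` (sphere c r \<inter> {x. n \<bullet> x = n \<bullet> c} - {0})"
  have U: "?U = {y. (2 *\<^sub>R c) \<bullet> y = 1} \<inter> {y. n \<bullet> y = 0}"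
  proof (intro set_eqI)
    fix y
    show "y \<in> ?U \<longleftrightarrow> y \<in> {y. (2 *\<^sub>R c) \<bullet> y = 1} \<inter> {y. n \<bullet> y = 0}"
    proof (cases "y = 0")
      case False
      show ?thesis
        unfolding mem_inversion_image_Diff_0 inversion_mem_sphere_Int_hyperplane_iff[OF r False]
        using False by (auto simp: cc m)
    qed (simp add: mem_inversion_image_Diff_0)
  qed
  show "affine ?U" unfolding U by (intro affine_Int affine_hyperplane)
  define y0 where "y0 = inverse (2 * (c \<bullet> c)) *\<^sub>R c"
  define V where "V = {y. c \<bullet> y = 0 \<and> n \<bullet> y = 0}"
  have cc0: "c \<bullet> c \<noteq> 0" using c0 by simp
  have "?U = (+) y0 ` V"
  proof (intro set_eqI iffI)
    fix y assume "y \<in> ?U"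
    then have "y - y0 \<in> V" "y = y0 + (y - y0)"
      using cc0 m unfolding U V_def y0_def by (auto simp: inner_diff_right inner_commute)
    then show "y \<in> (+) y0 ` V" by blast
  next
    fix y assume "y \<in> (+) y0 ` V"
    then obtain v where "v \<in> V" "y = y0 + v" by auto
    then show "y \<in> ?U"
      using cc0 m unfolding U V_def y0_def by (auto simp: inner_add_right inner_commute)
  qed
  moreover have "subspace V" unfolding V_def subspace_def by (auto simp: inner_add_right)
  moreover have "dim V + 2 = DIM('a)"
    unfolding V_def by (rule dim_orthogonal_pair[OF c0 n]) (use m in \<open>simp add: inner_commute\<close>)
  ultimately show "aff_dim ?U = int DIM('a) - 2"
    by (simp add: aff_dim_translation_eq aff_dim_subspace)
qed

lemma codim2_sphere_sphere_Int_quadric: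
  fixes c n :: "'a::euclidean_space" and k m :: real
  defines "U \<equiv> {y. k * (y \<bullet> y) - 2 * (c \<bullet> y) + 1 = 0 \<and> n \<bullet> y = m * (y \<bullet> y)}"
  assumes k: "k \<noteq> 0" "k \<le> c \<bullet> c" and n: "n \<noteq> 0" and ab: "ya \<in> U" "yb \<in> U" "ya \<noteq> yb"
  shows "codim2_sphere U"
proof -
  define \<nu> where "\<nu> = k *\<^sub>R n - (2 * m) *\<^sub>R c"
  let ?S = "sphere (inverse k *\<^sub>R c) (sqrt (c \<bullet> c - k * 1) / \<bar>k\<bar>)"
  have "k * 1 \<le> c \<bullet> c" using k(2) by simp
  note S = quadric_eq_sphere[OF k(1) this]
  \<comment> \<open>on the sphere, the second quadric equation becomes linear\<close>
  have "n \<bullet> y = m * (y \<bullet> y) \<longleftrightarrow> \<nu> \<bullet> y = - m"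
    if "k * (y \<bullet> y) - 2 * (c \<bullet> y) + 1 = 0" for y
  proof -
    have "2 * (c \<bullet> y) = 1 + k * (y \<bullet> y)" using that by linarith
    then have "\<nu> \<bullet> y = k * (n \<bullet> y - m * (y \<bullet> y)) - m"
      by (simp add: \<nu>_def inner_diff_left algebra_simps)
    then show ?thesis using k(1) by simp
  qed
  then have U: "U = ?S \<inter> {y. \<nu> \<bullet> y = - m}"
    unfolding U_def using S by blast
  have "\<nu> \<bullet> ya = - m" using ab(1) unfolding U by simp
  have "\<nu> \<noteq> 0"
  proof
    assume "\<nu> = 0"
    with \<open>\<nu> \<bullet> ya = - m\<close> have "m = 0" by simp
    with \<open>\<nu> = 0\<close> k(1) n show False by (simp add: \<nu>_def)
  qed
  then show ?thesis using ab unfolding U by (rule sphere_Int_hyperplane_codim2_sphere)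
qed

lemma codim2_sphere_hyperplane_Int_quadric:
  fixes c n :: "'a::euclidean_space" and m :: real
  defines "U \<equiv> {y. (2 *\<^sub>R c) \<bullet> y = 1 \<and> n \<bullet> y = m * (y \<bullet> y)}"
  assumes m: "m \<noteq> 0" and ab: "ya \<in> U" "yb \<in> U" "ya \<noteq> yb"
  shows "codim2_sphere U"
proof -
  let ?b = "(1/2) *\<^sub>R n"
  let ?S = "sphere (inverse m *\<^sub>R ?b) (sqrt (?b \<bullet> ?b - m * 0) / \<bar>m\<bar>)"
  have "m * 0 \<le> ?b \<bullet> ?b" by simp
  note S = quadric_eq_sphere[OF m this]
  have eq: "n \<bullet> y = m * (y \<bullet> y) \<longleftrightarrow> m * (y \<bullet> y) - 2 * (?b \<bullet> y) + 0 = 0" for y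
    by auto
  have U: "U = ?S \<inter> {y. (2 *\<^sub>R c) \<bullet> y = 1}"
    unfolding U_def eq S by auto
  have "2 *\<^sub>R c \<noteq> 0" using ab(1) by (auto simp: U_def)
  then show ?thesis using ab unfolding U by (rule sphere_Int_hyperplane_codim2_sphere)
qed

lemma inversion_codim2_sphere_avoiding_0:
  fixes c n :: "'a::euclidean_space" and r :: real
  defines "T \<equiv> sphere c r \<inter> {x. n \<bullet> x = n \<bullet> c}"
  assumes r: "r > 0" and n: "n \<noteq> 0" and z: "0 \<notin> T"
    and pa: "pa \<in> T" and pb: "pb \<in> T" and ne: "pa \<noteq> pb"
  shows "codim2_sphere (inversion ` T)"
proof -
  define k where "k = c \<bullet> c - r\<^sup>2"
  define m where "m = n \<bullet> c"
  have U: "inversion ` T = {y. k * (y \<bullet> y) - 2 * (c \<bullet> y) + 1 = 0 \<and> n \<bullet> y = m * (y \<bullet> y)}"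
  proof (rule set_eqI)
    fix y
    show "y \<in> inversion ` T \<longleftrightarrow> y \<in> {y. k * (y \<bullet> y) - 2 * (c \<bullet> y) + 1 = 0 \<and> n \<bullet> y = m * (y \<bullet> y)}"
    proof (cases "y = 0")
      case True then show ?thesis using z by (auto simp: image_iff)
    next
      case False
      have "T - {0} = T" using z by auto
      then have "y \<in> inversion ` T \<longleftrightarrow> inversion y \<in> T"
        using mem_inversion_image_Diff_0[of y T] False by simp
      then show ?thesis
        unfolding T_def k_def m_def inversion_mem_sphere_Int_hyperplane_iff[OF r False] by simp
    qed
  qed
  have ab: "inversion pa \<in> inversion ` T" "inversion pb \<in> inversion ` T" "inversion pa \<noteq> inversion pb"
    using pa pb ne by (auto dest: arg_cong[of _ _ inversion])
  show ?thesis
  proof (cases "k = 0")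
    case False
    moreover have "k \<le> c \<bullet> c" by (simp add: k_def)
    ultimately show ?thesis using n ab unfolding U by (rule codim2_sphere_sphere_Int_quadric)
  next
    case True
    have "m \<noteq> 0"
    proof
      assume "m = 0"
      have "c \<bullet> c = r\<^sup>2" using True by (simp add: k_def)
      then have "norm c = r" using r by (simp add: power2_eq_iff_nonneg flip: power2_norm_eq_inner)
      then show False using z \<open>m = 0\<close> unfolding T_def m_def by simp
    qed
    have T': "inversion ` T = {y. (2 *\<^sub>R c) \<bullet> y = 1 \<and> n \<bullet> y = m * (y \<bullet> y)}"
      unfolding U using True by auto
    show ?thesis using \<open>m \<noteq> 0\<close> ab unfolding T' by (rule codim2_sphere_hyperplane_Int_quadric)
  qed
qed


section \<open>The quaternions as a normed division algebra\<close>

text \<open>A copy of \<open>quat\<close> carrying the division algebra structure, so that the class-based algebra of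
  the library applies; \<open>quat\<close> itself keeps its Euclidean structure.\<close>
typedef quaternion = "UNIV :: quat set" morphisms to_quat of_quat by auto

setup_lifting type_definition_quaternion

lemma cmod_sq_diff: "(cmod (x - y))\<^sup>2 = (cmod x)\<^sup>2 + (cmod y)\<^sup>2 - 2 * Re (x * cnj y)"
  by (simp add: cmod_power2 power2_diff power2_sum algebra_simps)

lemma cmod_sq_add: "(cmod (x + y))\<^sup>2 = (cmod x)\<^sup>2 + (cmod y)\<^sup>2 + 2 * Re (x * cnj y)"
  by (simp add: cmod_power2 power2_diff power2_sum algebra_simps)

lemma norm_qmul: "norm (qmul p q) = norm p * norm q"
proof -
  obtain a b c d where pq: "p = (a, b)" "q = (c, d)" by (cases p; cases q)
  \<comment> \<open>the cross terms of the two squared moduli cancel\<close>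
  have "Re (a * c * cnj (b * cnj d)) = Re (a * d * cnj (b * cnj c))"
    by (simp add: algebra_simps)
  then have "(norm (qmul p q))\<^sup>2 = (norm p * norm q)\<^sup>2"
    by (simp add: pq qmul_def norm_prod_def cmod_sq_diff cmod_sq_add norm_mult power_mult_distrib
        algebra_simps)
  then show ?thesis by (simp add: power2_eq_iff_nonneg)
qed

lemma qmul_qinv:
  assumes "q \<noteq> 0"
  shows "qmul q (qinv q) = qone" "qmul (qinv q) q = qone"
proof -
  obtain a b where q: "q = (a, b)" by (cases q)
  define n where "n = complex_of_real ((cmod a)\<^sup>2 + (cmod b)\<^sup>2)"
  have "(cmod a)\<^sup>2 + (cmod b)\<^sup>2 \<noteq> 0"
    using assms by (auto simp: q add_nonneg_eq_0_iff zero_prod_def)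
  then have "n \<noteq> 0" unfolding n_def of_real_eq_0_iff .
  moreover have "a * cnj a + b * cnj b = n"
    by (simp only: n_def of_real_add complex_norm_square)
  then have "cnj a * a + cnj b * b = n" by (simp add: mult.commute)
  moreover have "cnj n = n" by (simp add: n_def)
  moreover have "qinv q = (cnj a / n, - b / n)" unfolding qinv_def q n_def Let_def by simp
  ultimately show "qmul q (qinv q) = qone" "qmul (qinv q) q = qone"
    by (simp_all add: q qmul_def qone_def diff_divide_distrib
        add_divide_distrib[symmetric] mult.commute)
qed

instantiation quaternion :: real_div_algebra
begin

lift_definition zero_quaternion :: quaternion is 0 .
lift_definition one_quaternion :: quaternion is qone .
lift_definition plus_quaternion :: "quaternion \<Rightarrow> quaternion \<Rightarrow> quaternion" is "(+)" .
lift_definition minus_quaternion :: "quaternion \<Rightarrow> quaternion \<Rightarrow> quaternion" is "(-)" .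
lift_definition uminus_quaternion :: "quaternion \<Rightarrow> quaternion" is uminus .
lift_definition times_quaternion :: "quaternion \<Rightarrow> quaternion \<Rightarrow> quaternion" is qmul .
lift_definition inverse_quaternion :: "quaternion \<Rightarrow> quaternion" is qinv .
lift_definition scaleR_quaternion :: "real \<Rightarrow> quaternion \<Rightarrow> quaternion" is scaleR .

definition divide_quaternion :: "quaternion \<Rightarrow> quaternion \<Rightarrow> quaternion"
  where "divide_quaternion x y = x * inverse y"

instance
proof
  fix a b c :: quaternion and r s :: real
  show "a * b * c = a * (b * c)" by transfer (simp add: qmul_def algebra_simps)
  show "1 * a = a" "a * 1 = a" by (transfer, simp add: qmul_def qone_def)+
  show "(a + b) * c = a * c + b * c" "a * (b + c) = a * b + a * c"
    by (transfer, simp add: qmul_def algebra_simps)+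
  show "a + b + c = a + (b + c)" "a + b = b + a" "0 + a = a" "- a + a = 0" "a - b = a + - b"
    by (transfer, simp add: algebra_simps)+
  show "(0::quaternion) \<noteq> 1" by transfer (simp add: qone_def zero_prod_def)
  show "inverse (0::quaternion) = 0" by transfer (simp add: qinv_def zero_prod_def)
  show "a \<noteq> 0 \<Longrightarrow> inverse a * a = 1" "a \<noteq> 0 \<Longrightarrow> a * inverse a = 1"
    by (transfer, simp add: qmul_qinv)+
  show "divide a b = a * inverse b" by (simp add: divide_quaternion_def)
  show "r *\<^sub>R (a + b) = r *\<^sub>R a + r *\<^sub>R b" "(r + s) *\<^sub>R a = r *\<^sub>R a + s *\<^sub>R a"
    "r *\<^sub>R s *\<^sub>R a = (r * s) *\<^sub>R a" "1 *\<^sub>R a = a"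
    by (transfer, simp add: algebra_simps)+
  show "r *\<^sub>R a * b = r *\<^sub>R (a * b)" "a * r *\<^sub>R b = r *\<^sub>R (a * b)"
    by (transfer, simp add: qmul_def scaleR_prod_def complex_cnj_scaleR scaleR_right_diff_distrib
        scaleR_right_distrib)+
qed

end

instantiation quaternion :: real_normed_div_algebra
begin

lift_definition norm_quaternion :: "quaternion \<Rightarrow> real" is norm .

definition sgn_quaternion :: "quaternion \<Rightarrow> quaternion" where "sgn_quaternion x = x /\<^sub>R norm x"

definition dist_quaternion :: "quaternion \<Rightarrow> quaternion \<Rightarrow> real"
  where "dist_quaternion x y = norm (x - y)"

definition uniformity_quaternion :: "(quaternion \<times> quaternion) filter"
  where "uniformity_quaternion = (INF e\<in>{0<..}. principal {(x, y). dist x y < e})"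

definition open_quaternion :: "quaternion set \<Rightarrow> bool"
  where "open_quaternion U \<longleftrightarrow> (\<forall>x\<in>U. eventually (\<lambda>(x', y). x' = x \<longrightarrow> y \<in> U) uniformity)"

instance
proof
  fix a b :: quaternion and r :: real
  show "norm a = 0 \<longleftrightarrow> a = 0" by transfer simp
  show "norm (a + b) \<le> norm a + norm b" by transfer (rule norm_triangle_ineq)
  show "norm (r *\<^sub>R a) = \<bar>r\<bar> * norm a" by transfer simp
  show "norm (a * b) = norm a * norm b" by transfer (rule norm_qmul)
qed (rule sgn_quaternion_def dist_quaternion_def open_quaternion_def uniformity_quaternion_def)+

end

lemmas to_quat_simps =
  zero_quaternion.rep_eq one_quaternion.rep_eq plus_quaternion.rep_eq minus_quaternion.rep_eq
  uminus_quaternion.rep_eq times_quaternion.rep_eq inverse_quaternion.rep_eq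
  scaleR_quaternion.rep_eq

lemma to_quat_inject' [simp]: "to_quat x = to_quat y \<longleftrightarrow> x = y"
  by (fact to_quat_inject)

lemma to_quat_of_quat [simp]: "to_quat (of_quat y) = y"
  by (simp add: of_quat_inverse)

lemma of_quat_to_quat [simp]: "of_quat (to_quat x) = x"
  by (fact to_quat_inverse)

lemma to_quat_eq_0_iff [simp]: "to_quat x = 0 \<longleftrightarrow> x = 0"
  by (metis to_quat_inject zero_quaternion.rep_eq)

lemma of_quat_eq_0_iff [simp]: "of_quat y = 0 \<longleftrightarrow> y = 0"
  by (metis to_quat_eq_0_iff of_quat_inverse UNIV_I)

lemma quaternion_eq_iff: "x = y \<longleftrightarrow> fst (to_quat x) = fst (to_quat y) \<and> snd (to_quat x) = snd (to_quat y)"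
  by (metis prod_eq_iff to_quat_inject)

lemma norm_to_quat [simp]: "norm (to_quat x) = norm x"
  by (simp add: norm_quaternion.rep_eq)

lemma to_quat_of_real: "to_quat (of_real r) = (complex_of_real r, 0)"
proof -
  have "to_quat (of_real r) = r *\<^sub>R qone"
    by (simp add: of_real_def scaleR_quaternion.rep_eq one_quaternion.rep_eq)
  also have "\<dots> = (complex_of_real r, 0)" by (simp add: qone_def scaleR_prod_def complex_eq_iff)
  finally show ?thesis .
qed

lemma dist_to_quat [simp]: "dist (to_quat x) (to_quat y) = dist x y"
  by (metis dist_norm minus_quaternion.rep_eq norm_to_quat)

lemma of_quat_add: "of_quat (y + z) = of_quat y + of_quat z"
  by (metis plus_quaternion.rep_eq to_quat_of_quat of_quat_to_quat)

lemma of_quat_scaleR: "of_quat (r *\<^sub>R y) = r *\<^sub>R of_quat y"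
  by (metis scaleR_quaternion.rep_eq to_quat_of_quat of_quat_to_quat)

lemma is_real_quat_iff_Reals: "is_real_quat (to_quat x) \<longleftrightarrow> x \<in> \<real>"
proof
  assume "is_real_quat (to_quat x)"
  then have "x = of_real (Re (fst (to_quat x)))"
    by (simp add: is_real_quat_def quaternion_eq_iff complex_eq_iff to_quat_of_real)
  then show "x \<in> \<real>" by (metis Reals_of_real)
qed (auto simp: is_real_quat_def to_quat_of_real elim!: Reals_cases)

definition qcnj :: "quaternion \<Rightarrow> quaternion"
  where "qcnj x = of_quat (cnj (fst (to_quat x)), - snd (to_quat x))"

definition qre :: "quaternion \<Rightarrow> real" where "qre x = Re (fst (to_quat x))"

lemma to_quat_qcnj: "to_quat (qcnj x) = (cnj (fst (to_quat x)), - snd (to_quat x))"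
  by (simp add: qcnj_def)

lemma qcnj_mult: "qcnj (x * y) = qcnj y * qcnj x"
  by (simp add: quaternion_eq_iff to_quat_simps to_quat_qcnj qmul_def algebra_simps)

lemma qcnj_of_real [simp]: "qcnj (of_real r) = of_real r"
  by (simp add: quaternion_eq_iff to_quat_qcnj to_quat_of_real)

lemma qre_qcnj [simp]: "qre (qcnj x) = qre x"
  by (simp add: qre_def to_quat_qcnj)

lemma qcnj_eq_iff_Reals: "qcnj x = x \<longleftrightarrow> x \<in> \<real>"
  by (auto simp: quaternion_eq_iff to_quat_qcnj complex_eq_iff is_real_quat_def
      simp flip: is_real_quat_iff_Reals)

lemma add_qcnj: "x + qcnj x = of_real (2 * qre x)"
  by (simp add: quaternion_eq_iff to_quat_simps qre_def complex_eq_iff to_quat_of_real to_quat_qcnj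
      del: of_real_mult)

lemma mult_qcnj: "x * qcnj x = of_real ((norm x)\<^sup>2)"
  and qcnj_mult_self: "qcnj x * x = of_real ((norm x)\<^sup>2)"
proof -
  obtain a b where ab: "to_quat x = (a, b)" by (cases "to_quat x")
  have "a * cnj a = (complex_of_real (cmod a))\<^sup>2" "b * cnj b = (complex_of_real (cmod b))\<^sup>2"
    by (metis complex_norm_square of_real_power)+
  then show "x * qcnj x = of_real ((norm x)\<^sup>2)" "qcnj x * x = of_real ((norm x)\<^sup>2)"
    by (simp_all add: quaternion_eq_iff to_quat_simps to_quat_qcnj qmul_def ab norm_prod_def
        to_quat_of_real algebra_simps del: of_real_power flip: norm_to_quat)
      (simp_all add: of_real_power)
qed

lemma qcnj_inverse: "qcnj (inverse a) = inverse (qcnj a)"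
proof (cases "a = 0")
  case False
  have "qcnj (inverse a) * qcnj a = 1"
    by (metis False qcnj_mult right_inverse qcnj_of_real of_real_1)
  then show ?thesis by (metis inverse_unique inverse_inverse_eq)
qed (simp add: quaternion_eq_iff to_quat_simps to_quat_qcnj qinv_def)

lemma qcnj_eq_norm_inverse: "a \<noteq> 0 \<Longrightarrow> qcnj a = of_real ((norm a)\<^sup>2) * inverse a"
  by (metis qcnj_mult_self mult.assoc right_inverse mult_1_right)

lemma qcnj_conjugate:
  assumes "a \<noteq> 0"
  shows "qcnj (a * x * inverse a) = a * qcnj x * inverse a"
proof -
  define n where "n = (of_real ((norm a)\<^sup>2) :: quaternion)"
  have n: "n \<noteq> 0" using assms by (simp add: n_def)
  have c: "inverse n * qcnj x = qcnj x * inverse n"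
    by (metis n_def of_real_mult_commute of_real_inverse)
  have "qcnj (a * x * inverse a) = inverse (qcnj a) * qcnj x * qcnj a"
    by (simp add: qcnj_mult qcnj_inverse mult.assoc)
  also have "\<dots> = (a * inverse n) * qcnj x * (n * inverse a)"
    using assms n by (simp add: qcnj_eq_norm_inverse[OF assms, folded n_def] nonzero_inverse_mult_distrib)
  also have "\<dots> = a * qcnj x * (inverse n * n) * inverse a"
    by (metis c mult.assoc)
  also have "\<dots> = a * qcnj x * inverse a" using n by simp
  finally show ?thesis .
qed

lemma qre_conjugate:
  assumes "a \<noteq> 0"
  shows "qre (a * x * inverse a) = qre x"
proof -
  have "of_real (2 * qre (a * x * inverse a)) = a * (x + qcnj x) * inverse a"
    by (simp only: add_qcnj[symmetric] qcnj_conjugate[OF assms] distrib_left distrib_right)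
  also have "\<dots> = of_real (2 * qre x)" by (simp only: add_qcnj of_real_conjugate[OF assms])
  finally show ?thesis by simp
qed

lemma qcnj_eq_minus_if_qre_0: "qre u = 0 \<Longrightarrow> qcnj u = - u"
  by (simp add: qre_def quaternion_eq_iff to_quat_simps to_quat_qcnj complex_eq_iff)

lemma square_eq_minus_norm_if_qre_0: "qre u = 0 \<Longrightarrow> u * u = - of_real ((norm u)\<^sup>2)"
  by (metis qcnj_eq_minus_if_qre_0 mult_qcnj mult_minus_right minus_minus)

lemma exists_anticommuting:
  assumes "qre u = 0"
  obtains a where "a \<noteq> 0" "a * u = - u * a"
proof -
  obtain t b where u: "to_quat u = (\<i> * complex_of_real t, b)"
    using assms by (cases "to_quat u") (auto simp: qre_def complex_eq_iff)
  show ?thesis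
  proof (cases "b = 0")
    case True
    then show ?thesis
      by (intro that[of "of_quat (0, 1)"]) (simp_all add: quaternion_eq_iff to_quat_simps qmul_def u)
  next
    case False
    then show ?thesis
      by (intro that[of "of_quat (0, \<i> * b)"])
        (simp_all add: quaternion_eq_iff to_quat_simps qmul_def u algebra_simps)
  qed
qed

text \<open>As \<open>u\<^sup>2 = v\<^sup>2\<close>, the element \<open>v (v + u)\<close> intertwines \<open>u\<close> and \<open>v\<close> unless \<open>v = - u\<close>.\<close>
lemma pure_quaternions_conjugate:
  assumes "qre u = 0" "qre v = 0" "norm u = norm v"
  obtains a where "a \<noteq> 0" "a * u = v * a"
proof (cases "v + u = 0")
  case True
  then have "v = - u" by (simp add: eq_neg_iff_add_eq_0)
  then show ?thesis using exists_anticommuting[OF assms(1)] that by auto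
next
  case False
  define s where "s = (of_real ((norm u)\<^sup>2) :: quaternion)"
  have vv: "v * v = - s" using square_eq_minus_norm_if_qre_0[OF assms(2)] assms(3) by (simp add: s_def)
  have uu: "u * u = - s" using square_eq_minus_norm_if_qre_0[OF assms(1)] by (simp add: s_def)
  have sv: "s * v = v * s" by (metis s_def of_real_mult_commute)
  show ?thesis
  proof (rule that)
    show "v * (v + u) \<noteq> 0" using False assms(3) by auto
    have "v * (v + u) * u = v * v * u + v * (u * u)" by (simp add: algebra_simps)
    also have "\<dots> = - (s * u) - s * v" by (simp add: vv uu sv)
    also have "\<dots> = v * (v * (v + u))"
      by (simp add: algebra_simps vv sv flip: mult.assoc)
    finally show "v * (v + u) * u = v * (v * (v + u))" .
  qed
qed

definition conj_orbit :: "quaternion \<Rightarrow> quaternion set"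
  where "conj_orbit w = {a * w * inverse a | a. a \<noteq> 0}"

lemma self_in_conj_orbit: "w \<in> conj_orbit w"
  unfolding conj_orbit_def by (intro CollectI exI[of _ 1]) simp

lemma conj_orbit_Reals:
  assumes "w \<in> \<real>"
  shows "conj_orbit w = {w}"
proof -
  obtain r where "w = of_real r" using assms by (auto elim: Reals_cases)
  then show ?thesis using self_in_conj_orbit[of w] by (auto simp: conj_orbit_def of_real_conjugate)
qed

lemma conj_orbit_eq_sphere:
  "to_quat ` conj_orbit w =
     sphere (to_quat (of_real (qre w))) (norm (w - of_real (qre w))) \<inter> {y. Re (fst y) = qre w}"
proof (intro equalityI subsetI)
  fix y assume "y \<in> to_quat ` conj_orbit w"
  then obtain a where a: "a \<noteq> 0" "y = to_quat (a * w * inverse a)" by (auto simp: conj_orbit_def)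
  have "a * w * inverse a - of_real (qre w) = a * (w - of_real (qre w)) * inverse a"
    using of_real_conjugate[OF a(1), of "qre w"] by (simp add: algebra_simps)
  moreover have "dist (of_real (qre w)) (a * w * inverse a) = norm (a * w * inverse a - of_real (qre w))"
    unfolding dist_norm by (rule norm_minus_commute)
  ultimately have "dist (of_real (qre w)) (a * w * inverse a) = norm (a * (w - of_real (qre w)) * inverse a)"
    by simp
  with a show "y \<in> sphere (to_quat (of_real (qre w))) (norm (w - of_real (qre w))) \<inter> {y. Re (fst y) = qre w}"
    by (simp add: norm_conjugate qre_conjugate flip: qre_def)
next
  fix y assume y: "y \<in> sphere (to_quat (of_real (qre w))) (norm (w - of_real (qre w))) \<inter> {y. Re (fst y) = qre w}"
  define x where "x = of_quat y"
  have yx: "y = to_quat x" by (simp add: x_def)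
  have "dist (of_real (qre w)) x = norm (w - of_real (qre w))" "qre x = qre w"
    using y unfolding yx by (simp_all add: qre_def)
  moreover have "norm (x - of_real (qre w)) = dist (of_real (qre w)) x"
    unfolding dist_norm by (rule norm_minus_commute)
  ultimately have "qre (w - of_real (qre w)) = 0" "qre (x - of_real (qre w)) = 0"
    and "norm (w - of_real (qre w)) = norm (x - of_real (qre w))"
    by (simp_all add: qre_def to_quat_simps to_quat_of_real)
  then obtain a where a: "a \<noteq> 0" "a * (w - of_real (qre w)) = (x - of_real (qre w)) * a"
    by (rule pure_quaternions_conjugate)
  then have "a * w = x * a" by (simp add: algebra_simps of_real_mult_commute[of "qre w" a])
  then have "x = a * w * inverse a" using a(1) by (simp add: mult.assoc)
  then show "y \<in> to_quat ` conj_orbit w" using a(1) by (auto simp: conj_orbit_def yx)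
qed

lemma qcnj_in_conj_orbit: "qcnj w \<in> conj_orbit w"
proof -
  have qc: "qcnj w = of_real (2 * qre w) - w"
    by (metis add_qcnj add_diff_cancel_left')
  have two: "of_real (2 * qre w) = of_real (qre w) + (of_real (qre w) :: quaternion)"
    by (metis mult_2 of_real_add)
  have "dist (of_real (qre w)) (qcnj w) = norm (of_real (qre w) - qcnj w)"
    by (rule dist_norm)
  also have "\<dots> = norm (w - of_real (qre w))"
    unfolding qc two by (simp add: algebra_simps)
  finally have "to_quat (qcnj w) \<in> to_quat ` conj_orbit w"
    unfolding conj_orbit_eq_sphere by (simp flip: qre_def)
  then show ?thesis by (auto simp: image_iff)
qed

section \<open>Moebius transformations\<close>

type_synonym qmatrix = "quaternion \<times> quaternion \<times> quaternion \<times> quaternion"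

fun qmat_of :: "qmatrix \<Rightarrow> qmat" where
  "qmat_of (A, B, C, D) = (to_quat A, to_quat B, to_quat C, to_quat D)"

declare qmat_of.simps [simp del]

abbreviation moeb :: "qmatrix \<Rightarrow> hq \<Rightarrow> hq" where "moeb M \<equiv> mobius (qmat_of M)"

fun qmatrix_mult :: "qmatrix \<Rightarrow> qmatrix \<Rightarrow> qmatrix" where
  "qmatrix_mult (A, B, C, D) (E, F, G, K) = (A * E + B * G, A * F + B * K, C * E + D * G, C * F + D * K)"

definition qmatrix_one :: qmatrix where "qmatrix_one = (1, 0, 0, 1)"

definition qinvertible :: "qmatrix \<Rightarrow> bool"
  where "qinvertible M \<longleftrightarrow> (\<exists>N. qmatrix_mult M N = qmatrix_one \<and> qmatrix_mult N M = qmatrix_one)"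

lemma qmat_of_cases: obtains M where "g = qmat_of M"
proof -
  obtain a b c d where "g = (a, b, c, d)" by (cases g)
  then have "g = qmat_of (of_quat a, of_quat b, of_quat c, of_quat d)" by (simp add: qmat_of.simps)
  then show thesis ..
qed

lemma qmat_mul_qmat_of: "qmat_mul (qmat_of M) (qmat_of N) = qmat_of (qmatrix_mult M N)"
  by (cases M; cases N) (simp add: qmat_mul_def qmat_of.simps to_quat_simps)

lemma qmat_id_eq: "qmat_id = qmat_of qmatrix_one"
  by (simp add: qmat_id_def qmatrix_one_def qmat_of.simps to_quat_simps)

lemma qmat_of_inject: "qmat_of M = qmat_of N \<longleftrightarrow> M = N"
  by (cases M; cases N) (simp add: qmat_of.simps)

lemma qmatrix_mult_assoc: "qmatrix_mult (qmatrix_mult M N) P = qmatrix_mult M (qmatrix_mult N P)"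
  by (cases M; cases N; cases P) (simp add: algebra_simps)

lemma qmatrix_mult_one [simp]: "qmatrix_mult M qmatrix_one = M" "qmatrix_mult qmatrix_one M = M"
  by (cases M; simp add: qmatrix_one_def)+

lemma qmat_of_in_GL2H_iff: "qmat_of M \<in> GL2H \<longleftrightarrow> qinvertible M"
proof
  assume "qmat_of M \<in> GL2H"
  then obtain N where "qmat_mul (qmat_of M) N = qmat_id" "qmat_mul N (qmat_of M) = qmat_id"
    by (auto simp: GL2H_def)
  moreover obtain N' where "N = qmat_of N'" by (rule qmat_of_cases)
  ultimately have "qmatrix_mult M N' = qmatrix_one" "qmatrix_mult N' M = qmatrix_one"
    by (simp_all add: qmat_mul_qmat_of qmat_id_eq qmat_of_inject)
  then show "qinvertible M" unfolding qinvertible_def by blast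
next
  assume "qinvertible M"
  then obtain N where "qmatrix_mult M N = qmatrix_one" "qmatrix_mult N M = qmatrix_one"
    unfolding qinvertible_def by blast
  then have "qmat_mul (qmat_of M) (qmat_of N) = qmat_id" "qmat_mul (qmat_of N) (qmat_of M) = qmat_id"
    by (simp_all add: qmat_mul_qmat_of qmat_id_eq)
  then show "qmat_of M \<in> GL2H" unfolding GL2H_def by blast
qed

lemma qinvertible_mult:
  assumes "qinvertible M" "qinvertible N"
  shows "qinvertible (qmatrix_mult M N)"
proof -
  obtain M' where M: "qmatrix_mult M M' = qmatrix_one" "qmatrix_mult M' M = qmatrix_one"
    using assms(1) unfolding qinvertible_def by blast
  obtain N' where N: "qmatrix_mult N N' = qmatrix_one" "qmatrix_mult N' N = qmatrix_one"
    using assms(2) unfolding qinvertible_def by blast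
  have "qmatrix_mult (qmatrix_mult M N) (qmatrix_mult N' M') = qmatrix_mult M (qmatrix_mult (qmatrix_mult N N') M')"
    "qmatrix_mult (qmatrix_mult N' M') (qmatrix_mult M N) = qmatrix_mult N' (qmatrix_mult (qmatrix_mult M' M) N)"
    by (simp_all only: qmatrix_mult_assoc)
  then have "qmatrix_mult (qmatrix_mult M N) (qmatrix_mult N' M') = qmatrix_one \<and>
      qmatrix_mult (qmatrix_mult N' M') (qmatrix_mult M N) = qmatrix_one"
    using M N by simp
  then show ?thesis unfolding qinvertible_def by blast
qed

definition fin :: "quaternion \<Rightarrow> hq" where "fin x = Fin (to_quat x)"

lemma fin_eq_iff [simp]: "fin x = fin y \<longleftrightarrow> x = y"
  by (simp add: fin_def)

lemma fin_neq_Inf [simp]: "fin x \<noteq> Inf" "Inf \<noteq> fin x"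
  by (simp_all add: fin_def)

lemma Fin_eq_fin: "Fin y = fin (of_quat y)"
  by (simp add: fin_def)

lemma hq_cases_fin: obtains x where "p = fin x" | "p = Inf"
  by (cases p) (auto simp: Fin_eq_fin)

lemma mobius_fin:
  "moeb (A, B, C, D) (fin x) = (if C * x + D = 0 then Inf else fin ((A * x + B) * inverse (C * x + D)))"
  by (simp add: fin_def qmat_of.simps
      flip: times_quaternion.rep_eq plus_quaternion.rep_eq inverse_quaternion.rep_eq)

lemma mobius_Inf: "moeb (A, B, C, D) Inf = (if C = 0 then Inf else fin (A * inverse C))"
  by (simp add: fin_def qmat_of.simps flip: times_quaternion.rep_eq inverse_quaternion.rep_eq)

text \<open>Homogeneous coordinates: \<open>(u, v)\<close> represents the point \<open>u v\<^sup>-\<^sup>1\<close>, and \<open>(1, 0)\<close> represents \<open>\<infinity>\<close>.\<close>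
definition hproj :: "quaternion \<times> quaternion \<Rightarrow> hq"
  where "hproj z = (if snd z = 0 then Inf else fin (fst z * inverse (snd z)))"

fun hcoords :: "hq \<Rightarrow> quaternion \<times> quaternion" where
  "hcoords (Fin q) = (of_quat q, 1)"
| "hcoords Inf = (1, 0)"

fun qmatrix_act :: "qmatrix \<Rightarrow> quaternion \<times> quaternion \<Rightarrow> quaternion \<times> quaternion" where
  "qmatrix_act (A, B, C, D) (u, v) = (A * u + B * v, C * u + D * v)"

lemma hproj_hcoords [simp]: "hproj (hcoords x) = x"
  by (cases x) (auto simp: hproj_def fin_def)

lemma hcoords_nonzero: "hcoords x \<noteq> (0, 0)"
  by (cases x) auto

lemma qmatrix_act_mult: "qmatrix_act (qmatrix_mult M N) z = qmatrix_act M (qmatrix_act N z)"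
  by (cases M; cases N; cases z) (simp add: algebra_simps)

lemma qmatrix_act_one: "qmatrix_act qmatrix_one z = z"
  by (cases z) (simp add: qmatrix_one_def)

lemma mobius_hproj:
  assumes "z \<noteq> (0, 0)"
  shows "moeb M (hproj z) = hproj (qmatrix_act M z)"
proof -
  obtain A B C D where M: "M = (A, B, C, D)" by (cases M)
  obtain u v where z: "z = (u, v)" by (cases z)
  show ?thesis
  proof (cases "v = 0")
    case True
    then have "u \<noteq> 0" using assms z by auto
    moreover have "u * (inverse u * inverse C) = inverse C" using \<open>u \<noteq> 0\<close> by (rule mult_inverse_cancel_left)
    ultimately show ?thesis using True
      by (simp add: M z hproj_def mobius_Inf nonzero_inverse_mult_distrib mult.assoc del: mobius.simps)
  next
    case False
    have "C * (u * inverse v) + D = (C * u + D * v) * inverse v"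
      "A * (u * inverse v) + B = (A * u + B * v) * inverse v"
      using False by (simp_all add: algebra_simps)
    moreover have "inverse v * (v * y) = y" for y using False by (rule inverse_mult_cancel_left)
    ultimately show ?thesis using False
      by (simp add: M z hproj_def mobius_fin nonzero_inverse_mult_distrib mult.assoc del: mobius.simps)
  qed
qed

lemma mobius_mult:
  assumes "qinvertible N"
  shows "moeb (qmatrix_mult M N) x = moeb M (moeb N x)"
proof -
  obtain N' where N': "qmatrix_mult N' N = qmatrix_one" using assms by (auto simp: qinvertible_def)
  have "qmatrix_act N (hcoords x) \<noteq> (0, 0)"
  proof
    assume "qmatrix_act N (hcoords x) = (0, 0)"
    then have "qmatrix_act N' (qmatrix_act N (hcoords x)) = (0, 0)" by (cases N') simp
    then show False using N' hcoords_nonzero[of x] by (simp add: qmatrix_act_one flip: qmatrix_act_mult)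
  qed
  then show ?thesis
    using mobius_hproj[OF hcoords_nonzero, of "qmatrix_mult M N" x] mobius_hproj[OF hcoords_nonzero, of N x]
      mobius_hproj[of "qmatrix_act N (hcoords x)" M]
    by (simp add: qmatrix_act_mult)
qed

lemma mobius_one: "moeb qmatrix_one x = x"
  using mobius_hproj[OF hcoords_nonzero, of qmatrix_one x] by (simp add: qmatrix_act_one)

lemma qinvertible_inverse_mobius:
  assumes "qinvertible M"
  obtains M' where "qinvertible M'" "\<And>x. moeb M (moeb M' x) = x" "\<And>x. moeb M' (moeb M x) = x"
proof -
  obtain M' where M': "qmatrix_mult M M' = qmatrix_one" "qmatrix_mult M' M = qmatrix_one"
    using assms unfolding qinvertible_def by blast
  then have "qinvertible M'" unfolding qinvertible_def by blast
  then show ?thesis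
    using that mobius_mult[OF assms, of M'] mobius_mult[of M' M] M' by (simp add: mobius_one)
qed

definition affine_qm :: "quaternion \<Rightarrow> quaternion \<Rightarrow> qmatrix"
  where "affine_qm b c = (1, c * inverse b, 0, inverse b)"

definition inversion_qm :: qmatrix where "inversion_qm = (0, 1, 1, 0)"

definition conj_qm :: "quaternion \<Rightarrow> qmatrix" where "conj_qm a = (a, 0, 0, a)"

lemma qinvertible_affine_qm: "b \<noteq> 0 \<Longrightarrow> qinvertible (affine_qm b c)"
  unfolding qinvertible_def
  by (rule exI[of _ "(1, - c, 0, b)"]) (simp add: affine_qm_def qmatrix_one_def mult.assoc)

lemma qinvertible_inversion_qm: "qinvertible inversion_qm"
  unfolding qinvertible_def by (rule exI[of _ inversion_qm]) (simp add: inversion_qm_def qmatrix_one_def)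

lemma qinvertible_conj_qm: "a \<noteq> 0 \<Longrightarrow> qinvertible (conj_qm a)"
  unfolding qinvertible_def
  by (rule exI[of _ "conj_qm (inverse a)"]) (simp add: conj_qm_def qmatrix_one_def)

lemma mobius_affine_qm:
  "b \<noteq> 0 \<Longrightarrow> moeb (affine_qm b c) (fin x) = fin (x * b + c)"
  "moeb (affine_qm b c) Inf = Inf"
  by (simp_all add: affine_qm_def mobius_fin mobius_Inf algebra_simps mult.assoc del: mobius.simps)

lemma mobius_inversion_qm:
  "moeb inversion_qm (fin x) = (if x = 0 then Inf else fin (inverse x))"
  "moeb inversion_qm Inf = fin 0"
  by (simp_all add: inversion_qm_def mobius_fin mobius_Inf del: mobius.simps)

lemma mobius_conj_qm:
  "a \<noteq> 0 \<Longrightarrow> moeb (conj_qm a) (fin x) = fin (a * x * inverse a)"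
  "moeb (conj_qm a) Inf = Inf"
  by (simp_all add: conj_qm_def mobius_fin mobius_Inf del: mobius.simps)

lemma is_2sphere_iff_codim2_sphere: "is_2sphere S \<longleftrightarrow> (\<exists>X. codim2_sphere X \<and> S = Fin ` X)"
proof
  assume "is_2sphere S"
  then obtain c r A where h: "0 < r" "affine A" "aff_dim A = 3" "c \<in> A" "S = Fin ` (sphere c r \<inter> A)"
    unfolding is_2sphere_def by blast
  then have "codim2_sphere (sphere c r \<inter> A)" unfolding codim2_sphere_def
    by (intro exI[of _ c] exI[of _ r] exI[of _ A]) simp
  then show "\<exists>X. codim2_sphere X \<and> S = Fin ` X" using h(5) by blast
next
  assume "\<exists>X. codim2_sphere X \<and> S = Fin ` X"
  then obtain c r A where "0 < r" "affine A" "aff_dim A = 3" "c \<in> A" "S = Fin ` (sphere c r \<inter> A)"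
    unfolding codim2_sphere_def by auto
  then show "is_2sphere S" unfolding is_2sphere_def by blast
qed

lemma similarity_right_mult:
  assumes "b \<noteq> 0"
  shows "similarity (\<lambda>y. to_quat (of_quat y * b)) (norm b)"
proof (rule similarity.intro)
  show "linear (\<lambda>y. to_quat (of_quat y * b))"
    by (rule linearI) (simp_all add: of_quat_add of_quat_scaleR distrib_right to_quat_simps)
  show "norm (to_quat (of_quat y * b)) = norm b * norm y" for y
  proof -
    have "norm (of_quat y) = norm y" by (metis norm_to_quat to_quat_of_quat)
    then show ?thesis by (simp add: norm_mult mult.commute)
  qed
qed (simp add: assms)

lemma similarity_qcnj: "similarity (\<lambda>y::quat. (cnj (fst y), - snd y)) 1"
proof (rule similarity.intro)
  show "linear (\<lambda>y::quat. (cnj (fst y), - snd y))"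
    by (rule linearI) (simp_all add: scaleR_prod_def scaleR_conv_of_real)
qed (simp_all add: norm_prod_def)

lemma qinv_eq_inversion: "qinv y = (cnj (fst (inversion y)), - snd (inversion y))"
proof -
  obtain a b where y: "y = (a, b)" by (cases y)
  have "(norm y)\<^sup>2 = (cmod a)\<^sup>2 + (cmod b)\<^sup>2" by (simp add: y norm_prod_def)
  then show ?thesis
    by (simp add: qinv_def inversion_def y Let_def scaleR_conv_of_real divide_inverse mult.commute)
qed

lemma mobius_affine_qm_image:
  assumes "b \<noteq> 0"
  shows "moeb (affine_qm b c) ` Fin ` X = Fin ` ((\<lambda>y. to_quat (of_quat y * b) + to_quat c) ` X)"
  by (auto simp: image_image Fin_eq_fin mobius_affine_qm(1)[OF assms])
    (auto simp: fin_def to_quat_simps)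

lemma mobius_affine_qm_sphere_or_plane:
  assumes "b \<noteq> 0" and "is_2sphere S \<or> is_2plane S"
  shows "is_2sphere (moeb (affine_qm b c) ` S) \<or> is_2plane (moeb (affine_qm b c) ` S)"
proof -
  interpret similarity "\<lambda>y. to_quat (of_quat y * b)" "norm b"
    by (rule similarity_right_mult[OF assms(1)])
  let ?A = "\<lambda>y. to_quat (of_quat y * b) + to_quat c"
  from assms(2) show ?thesis
  proof
    assume "is_2sphere S"
    then obtain X where X: "codim2_sphere X" "S = Fin ` X" by (auto simp: is_2sphere_iff_codim2_sphere)
    have "codim2_sphere (?A ` X)" using X(1) by (rule codim2_sphere_image)
    moreover have "moeb (affine_qm b c) ` S = Fin ` (?A ` X)"
      unfolding X(2) by (rule mobius_affine_qm_image[OF assms(1)])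
    ultimately show ?thesis unfolding is_2sphere_iff_codim2_sphere by blast
  next
    assume "is_2plane S"
    then obtain P where P: "affine P" "aff_dim P = 2" "S = insert Inf (Fin ` P)"
      unfolding is_2plane_def by blast
    have "affine (?A ` P)" "aff_dim (?A ` P) = 2"
      using affine_image[OF P(1)] aff_dim_image P(2) by simp_all
    moreover have "moeb (affine_qm b c) ` S = insert Inf (Fin ` (?A ` P))"
      by (simp add: P(3) mobius_affine_qm_image[OF assms(1)] mobius_affine_qm(2))
    ultimately show ?thesis unfolding is_2plane_def by blast
  qed
qed

text \<open>The map \<open>x \<mapsto> x\<^sup>-\<^sup>1\<close> is the Euclidean inversion followed by quaternion conjugation, an isometry.\<close>
lemma mobius_inversion_qm_sphere:
  assumes X: "codim2_sphere X" and a: "a \<in> X" "a' \<in> X" "a \<noteq> a'"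
  shows "is_2sphere (moeb inversion_qm ` Fin ` X) \<or> is_2plane (moeb inversion_qm ` Fin ` X)"
proof -
  interpret similarity "\<lambda>y::quat. (cnj (fst y), - snd y)" 1 by (rule similarity_qcnj)
  let ?K = "\<lambda>y::quat. (cnj (fst y), - snd y) + 0" \<comment> \<open>in the shape \<open>L y + e\<close> of the locale\<close>
  obtain c r n where h: "r > 0" "n \<noteq> 0" "X = sphere c r \<inter> {x. n \<bullet> x = n \<bullet> c}"
    using codim2_sphereE[OF X] by blast
  have "moeb inversion_qm (Fin y) = (if y = 0 then Inf else Fin (?K (inversion y)))" for y
    unfolding Fin_eq_fin mobius_inversion_qm by (simp add: fin_def qinv_eq_inversion inverse_quaternion.rep_eq)
  then have img: "moeb inversion_qm ` Fin ` X = (if 0 \<in> X then {Inf} else {}) \<union> Fin ` (?K ` inversion ` (X - {0}))"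
    by (auto simp: image_image split: if_splits)
  show ?thesis
  proof (cases "0 \<in> X")
    case True
    then have "affine (inversion ` (X - {0}))" "aff_dim (inversion ` (X - {0})) = 2"
      using inversion_codim2_sphere_through_0[OF h(1,2)] h(3) by auto
    then have "affine (?K ` inversion ` (X - {0}))" "aff_dim (?K ` inversion ` (X - {0})) = 2"
      by (simp_all only: affine_image aff_dim_image)
    then show ?thesis unfolding is_2plane_def img using True by auto
  next
    case False
    then have "codim2_sphere (inversion ` X)"
      using inversion_codim2_sphere_avoiding_0[OF h(1,2)] a h(3) by simp
    then have "codim2_sphere (?K ` inversion ` X)" by (rule codim2_sphere_image)
    then show ?thesis unfolding is_2sphere_iff_codim2_sphere img using False by auto
  qed
qed

section \<open>Normalising three points\<close>

lemma mobius_inversion_affine_qm_sphere: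
  assumes b: "b \<noteq> 0" and X: "codim2_sphere X" and a: "a \<in> X" "a' \<in> X" "a \<noteq> a'"
  shows "is_2sphere (moeb inversion_qm ` moeb (affine_qm b c) ` Fin ` X) \<or>
    is_2plane (moeb inversion_qm ` moeb (affine_qm b c) ` Fin ` X)"
proof -
  interpret similarity "\<lambda>y. to_quat (of_quat y * b)" "norm b" by (rule similarity_right_mult[OF b])
  let ?A = "\<lambda>y. to_quat (of_quat y * b) + to_quat c"
  have "codim2_sphere (?A ` X)" using X by (rule codim2_sphere_image)
  moreover have "?A a \<in> ?A ` X" "?A a' \<in> ?A ` X" using a by auto
  moreover have "?A a \<noteq> ?A a'" using a(3) inj by (auto dest: injD)
  ultimately show ?thesis unfolding mobius_affine_qm_image[OF b] by (rule mobius_inversion_qm_sphere)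
qed

lemma crossratio_fin:
  "crossratio (fin a) (fin b) (fin c) (fin d) = to_quat (inverse (b - a) * (d - a) * inverse (d - c) * (b - c))"
  "crossratio Inf (fin b) (fin c) (fin d) = to_quat (inverse (d - c) * (b - c))"
  "crossratio (fin a) Inf (fin c) (fin d) = to_quat ((d - a) * inverse (d - c))"
  "crossratio (fin a) (fin b) Inf (fin d) = to_quat (inverse (b - a) * (d - a))"
  "crossratio (fin a) (fin b) (fin c) Inf = to_quat (inverse (b - a) * (b - c))"
  by (simp_all add: fin_def to_quat_simps)

definition inv_shift :: "quaternion \<Rightarrow> quaternion \<Rightarrow> hq"
  where "inv_shift f z = (if z = 0 then Inf else fin (inverse z + f))"

lemma inv_shift_surj: "p \<noteq> fin f \<Longrightarrow> \<exists>z. inv_shift f z = p"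
proof (cases p rule: hq_cases_fin)
  case (1 x)
  moreover assume "p \<noteq> fin f"
  ultimately show ?thesis by (intro exI[of _ "inverse (x - f)"]) (auto simp: inv_shift_def)
qed (auto simp: inv_shift_def)

lemma crossratio_inv_shift:
  assumes d: "z1 \<noteq> z3" "z1 \<noteq> z4" "z3 \<noteq> z4"
  shows "crossratio (inv_shift f z1) (fin f) (inv_shift f z3) (inv_shift f z4) =
    to_quat ((z1 - z4) * inverse (z3 - z4))"
proof -
  have d34: "z3 - z4 \<noteq> 0" using d by simp
  consider "z1 \<noteq> 0" "z3 \<noteq> 0" "z4 \<noteq> 0" | "z1 = 0" | "z3 = 0" | "z4 = 0" by blast
  then show ?thesis
  proof cases
    case 1
    have "inverse (f - (inverse z1 + f)) * (inverse z4 + f - (inverse z1 + f)) *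
          inverse (inverse z4 + f - (inverse z3 + f)) * (f - (inverse z3 + f))
        = (- z1) * (inverse z1 * (z1 - z4) * inverse z4) * (z4 * inverse (z3 - z4) * z3) * (- inverse z3)"
      using 1 d34 by (simp add: division_ring_inverse_diff' nonzero_inverse_mult_distrib mult.assoc)
    also have "\<dots> = (z1 - z4) * inverse (z3 - z4)"
      using 1 by (simp add: mult.assoc mult_inverse_cancel_left inverse_mult_cancel_left)
    finally show ?thesis using 1 by (simp add: inv_shift_def crossratio_fin)
  next
    case 2
    then have n: "z3 \<noteq> 0" "z4 \<noteq> 0" using d by auto
    have "inverse (inverse z4 + f - (inverse z3 + f)) * (f - (inverse z3 + f))
        = (z4 * inverse (z3 - z4) * z3) * (- inverse z3)"
      using n d34 by (simp add: division_ring_inverse_diff' nonzero_inverse_mult_distrib mult.assoc)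
    also have "\<dots> = (z1 - z4) * inverse (z3 - z4)"
      using n 2 by (simp add: mult.assoc mult_inverse_cancel_left inverse_mult_cancel_left)
    finally show ?thesis using 2 n by (simp add: inv_shift_def crossratio_fin)
  next
    case 3
    then have n: "z1 \<noteq> 0" "z4 \<noteq> 0" using d by auto
    have "inverse (f - (inverse z1 + f)) * (inverse z4 + f - (inverse z1 + f))
        = (- z1) * (inverse z1 * (z1 - z4) * inverse z4)"
      using n by (simp add: division_ring_inverse_diff' mult.assoc)
    also have "\<dots> = (z1 - z4) * inverse (z3 - z4)"
      using n 3 by (simp add: mult.assoc mult_inverse_cancel_left inverse_mult_cancel_left)
    finally show ?thesis using 3 n by (simp add: inv_shift_def crossratio_fin)
  next
    case 4
    then have "z1 \<noteq> 0" "z3 \<noteq> 0" using d by auto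
    with 4 show ?thesis by (simp add: inv_shift_def crossratio_fin)
  qed
qed

definition frame_map :: "qmatrix \<Rightarrow> hq \<Rightarrow> hq \<Rightarrow> hq \<Rightarrow> bool" where
  "frame_map G p1 p2 p3 \<longleftrightarrow> qinvertible G \<and>
     moeb G (fin 0) = p1 \<and> moeb G Inf = p2 \<and> moeb G (fin 1) = p3 \<and>
     (\<forall>X a a'. codim2_sphere X \<longrightarrow> a \<in> X \<longrightarrow> a' \<in> X \<longrightarrow> a \<noteq> a' \<longrightarrow>
        is_2sphere (moeb G ` Fin ` X) \<or> is_2plane (moeb G ` Fin ` X)) \<and>
     (\<forall>w. w \<noteq> 0 \<longrightarrow> w \<noteq> 1 \<longrightarrow> crossratio p1 p2 p3 (moeb G (fin w)) = to_quat (w * inverse (w - 1)))"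

lemma frame_map_Inf:
  assumes "x1 \<noteq> x3"
  shows "\<exists>G. frame_map G (fin x1) Inf (fin x3)"
proof -
  define b where "b = x3 - x1"
  have b: "b \<noteq> 0" using assms by (simp add: b_def)
  note G = mobius_affine_qm(1)[OF b, of x1]
  show ?thesis unfolding frame_map_def
  proof (intro exI[of _ "affine_qm b x1"] conjI allI impI)
    show "qinvertible (affine_qm b x1)" by (rule qinvertible_affine_qm[OF b])
    show "moeb (affine_qm b x1) (fin 0) = fin x1" by (simp add: G)
    show "moeb (affine_qm b x1) Inf = Inf" by (rule mobius_affine_qm(2))
    show "moeb (affine_qm b x1) (fin 1) = fin x3" unfolding G by (simp add: b_def)
    fix X :: "quat set" and a a' assume "codim2_sphere X"
    then have "is_2sphere (Fin ` X)" by (auto simp: is_2sphere_iff_codim2_sphere)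
    then show "is_2sphere (moeb (affine_qm b x1) ` Fin ` X) \<or> is_2plane (moeb (affine_qm b x1) ` Fin ` X)"
      using mobius_affine_qm_sphere_or_plane[OF b] by blast
  next
    fix w :: quaternion assume w: "w \<noteq> 0" "w \<noteq> 1"
    have "w * b + x1 - x3 = (w - 1) * b" by (simp add: b_def algebra_simps)
    then show "crossratio (fin x1) Inf (fin x3) (moeb (affine_qm b x1) (fin w)) = to_quat (w * inverse (w - 1))"
      using w b by (simp add: G crossratio_fin ratio_mult_right)
  qed
qed

lemma frame_map_fin:
  assumes d: "p1 \<noteq> p3" "p1 \<noteq> fin f" "p3 \<noteq> fin f"
  shows "\<exists>G. frame_map G p1 (fin f) p3"
proof -
  obtain z1 where z1: "inv_shift f z1 = p1" using inv_shift_surj[OF d(2)] by blast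
  obtain z3 where z3: "inv_shift f z3 = p3" using inv_shift_surj[OF d(3)] by blast
  have z13: "z1 \<noteq> z3" using z1 z3 d(1) by auto
  define b where "b = z3 - z1"
  have b: "b \<noteq> 0" using z13 by (simp add: b_def)
  define N where "N = qmatrix_mult inversion_qm (affine_qm b z1)"
  define G where "G = qmatrix_mult (affine_qm 1 f) N"
  have iN: "qinvertible N" unfolding N_def
    by (intro qinvertible_mult qinvertible_inversion_qm qinvertible_affine_qm b)
  have mG: "moeb G x = moeb (affine_qm 1 f) (moeb inversion_qm (moeb (affine_qm b z1) x))" for x
    unfolding G_def mobius_mult[OF iN] unfolding N_def mobius_mult[OF qinvertible_affine_qm[OF b]] ..
  have mG_fin: "moeb G (fin x) = inv_shift f (x * b + z1)" for x
    by (simp add: mG mobius_affine_qm(1)[OF b] mobius_inversion_qm mobius_affine_qm inv_shift_def)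
  show ?thesis unfolding frame_map_def
  proof (intro exI[of _ G] conjI allI impI)
    show "qinvertible G" unfolding G_def by (intro qinvertible_mult qinvertible_affine_qm iN) simp
    show "moeb G (fin 0) = p1" "moeb G (fin 1) = p3" using z1 z3 by (simp_all add: mG_fin b_def)
    show "moeb G Inf = fin f"
      by (simp add: mG mobius_affine_qm mobius_inversion_qm)
    fix X :: "quat set" and a a'
    assume "codim2_sphere X" "a \<in> X" "a' \<in> X" "a \<noteq> a'"
    then have "is_2sphere (moeb inversion_qm ` moeb (affine_qm b z1) ` Fin ` X) \<or>
        is_2plane (moeb inversion_qm ` moeb (affine_qm b z1) ` Fin ` X)"
      by (rule mobius_inversion_affine_qm_sphere[OF b])
    then have "is_2sphere (moeb (affine_qm 1 f) ` moeb inversion_qm ` moeb (affine_qm b z1) ` Fin ` X) \<or>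
        is_2plane (moeb (affine_qm 1 f) ` moeb inversion_qm ` moeb (affine_qm b z1) ` Fin ` X)"
      by (rule mobius_affine_qm_sphere_or_plane[rotated]) simp
    moreover have "moeb G ` S = moeb (affine_qm 1 f) ` moeb inversion_qm ` moeb (affine_qm b z1) ` S" for S
      unfolding image_image by (rule image_cong) (simp_all add: mG)
    ultimately show "is_2sphere (moeb G ` Fin ` X) \<or> is_2plane (moeb G ` Fin ` X)"
      by (simp only:)
  next
    fix w :: quaternion assume w: "w \<noteq> 0" "w \<noteq> 1"
    have e1: "z1 - (w * b + z1) = w * (- b)" and e3: "z3 - (w * b + z1) = (w - 1) * (- b)"
      by (simp_all add: b_def algebra_simps)
    then have "z1 \<noteq> w * b + z1" "z3 \<noteq> w * b + z1" using w b by auto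
    then have "crossratio p1 (fin f) p3 (moeb G (fin w)) = to_quat ((z1 - (w * b + z1)) * inverse (z3 - (w * b + z1)))"
      unfolding mG_fin z1[symmetric] z3[symmetric] by (intro crossratio_inv_shift z13)
    also have "\<dots> = to_quat (w * inverse (w - 1))"
      unfolding e1 e3 using ratio_mult_right[OF w(2), of "- b"] b by simp
    finally show "crossratio p1 (fin f) p3 (moeb G (fin w)) = to_quat (w * inverse (w - 1))" .
  qed
qed

lemma exists_frame_map:
  assumes "distinct [p1, p2, p3]"
  obtains G where "frame_map G p1 p2 p3"
proof (cases p2 rule: hq_cases_fin)
  case (1 f)
  then show ?thesis using frame_map_fin[of p1 p3 f] assms that by auto
next
  case 2
  then obtain x1 x3 where "p1 = fin x1" "p3 = fin x3" "x1 \<noteq> x3"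
    using assms by (cases p1 rule: hq_cases_fin; cases p3 rule: hq_cases_fin) auto
  then show ?thesis using frame_map_Inf 2 that by blast
qed

section \<open>The solution set\<close>

lemma codim2_sphere_conj_orbit:
  assumes "w \<notin> \<real>"
  shows "codim2_sphere (to_quat ` conj_orbit w)"
proof -
  define A where "A = {y::quat. Re (fst y) = qre w}"
  have "A = {y. (1, 0) \<bullet> y = qre w}" unfolding A_def by (auto simp: inner_prod_def)
  moreover have "(1::complex, 0::complex) \<noteq> 0" by (simp add: zero_prod_def)
  ultimately have "affine A" "aff_dim A = int DIM(quat) - 1" by (simp_all add: affine_hyperplane)
  moreover have "to_quat (of_real (qre w)) \<in> A" by (simp add: A_def to_quat_of_real)
  moreover have "w \<noteq> of_real (qre w)" using assms by (metis Reals_of_real)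
  then have "norm (w - of_real (qre w)) > 0" by simp
  ultimately show ?thesis unfolding codim2_sphere_def conj_orbit_eq_sphere A_def[symmetric] by blast
qed

lemma mobius_fixing_0_Inf_1:
  assumes "moeb K (fin 0) = fin 0" "moeb K Inf = Inf" "moeb K (fin 1) = fin 1"
  obtains a where "a \<noteq> 0" "\<And>x. moeb K (fin x) = fin (a * x * inverse a)"
proof -
  obtain A B C D where K: "K = (A, B, C, D)" by (cases K)
  have C: "C = 0" using assms(2) by (simp add: K mobius_Inf split: if_splits)
  have D: "D \<noteq> 0" using assms(1) by (auto simp: K C mobius_fin split: if_splits)
  have B: "B = 0" using assms(1) D by (simp add: K C mobius_fin)
  have "A * inverse D = 1" using assms(3) D by (simp add: K C B mobius_fin)
  then have "A = D" using D by (metis mult.assoc left_inverse mult_1_right mult_1_left)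
  then show ?thesis using that[of D] D by (simp add: K B C mobius_fin)
qed

lemma frame_map_preimage:
  assumes "frame_map H q1 q2 q3" "q4 \<notin> {q1, q2, q3}"
  obtains w where "w \<noteq> 0" "w \<noteq> 1" "q4 = moeb H (fin w)"
proof -
  obtain H' where H': "\<And>x. moeb H (moeb H' x) = x" "\<And>x. moeb H' (moeb H x) = x"
    using assms(1) qinvertible_inverse_mobius unfolding frame_map_def by metis
  have H: "moeb H (fin 0) = q1" "moeb H Inf = q2" "moeb H (fin 1) = q3"
    using assms(1) by (simp_all add: frame_map_def)
  show ?thesis
  proof (cases "moeb H' q4" rule: hq_cases_fin)
    case (1 w)
    then have "q4 = moeb H (fin w)" by (metis H'(1))
    then show ?thesis using that[of w] assms(2) H by auto
  next
    case 2
    then have "q4 = q2" by (metis H'(1) H(2))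
    then show ?thesis using assms(2) by simp
  qed
qed

lemma mobius_fixing_frame_mem_conj_orbit:
  assumes G: "frame_map G p1 p2 p3" and H: "frame_map H q1 q2 q3" and M: "qinvertible M"
    and "moeb M q1 = p1" "moeb M q2 = p2" "moeb M q3 = p3"
  shows "moeb M (moeb H (fin w)) \<in> moeb G ` fin ` conj_orbit w"
proof -
  have iH: "qinvertible H" and G0: "moeb G (fin 0) = p1" and GI: "moeb G Inf = p2"
    and G1: "moeb G (fin 1) = p3" and H0: "moeb H (fin 0) = q1" and HI: "moeb H Inf = q2"
    and H1: "moeb H (fin 1) = q3"
    using G H by (simp_all add: frame_map_def)
  obtain G' where G': "\<And>x. moeb G (moeb G' x) = x" "\<And>x. moeb G' (moeb G x) = x"
    using G qinvertible_inverse_mobius unfolding frame_map_def by metis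
  define K where "K = qmatrix_mult G' (qmatrix_mult M H)"
  have mK: "moeb K y = moeb G' (moeb M (moeb H y))" for y
    unfolding K_def mobius_mult[OF qinvertible_mult[OF M iH]] mobius_mult[OF iH] ..
  have "moeb K (fin 0) = fin 0" "moeb K Inf = Inf" "moeb K (fin 1) = fin 1"
    using assms(4-6) H0 HI H1 G'(2) by (simp_all add: mK flip: G0 GI G1)
  then obtain a where a: "a \<noteq> 0" "\<And>x. moeb K (fin x) = fin (a * x * inverse a)"
    using mobius_fixing_0_Inf_1 by blast
  have "moeb M (moeb H (fin w)) = moeb G (moeb K (fin w))" by (simp add: mK G'(1))
  then show ?thesis using a by (auto simp: conj_orbit_def)
qed

lemma mobius_fixing_frame_through_conj_orbit:
  assumes G: "frame_map G p1 p2 p3" and H: "frame_map H q1 q2 q3" and a: "a \<noteq> 0"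
  obtains M where "qinvertible M" "moeb M q1 = p1" "moeb M q2 = p2" "moeb M q3 = p3"
    "moeb M (moeb H (fin w)) = moeb G (fin (a * w * inverse a))"
proof -
  have iG: "qinvertible G" and iH: "qinvertible H" and G0: "moeb G (fin 0) = p1"
    and GI: "moeb G Inf = p2" and G1: "moeb G (fin 1) = p3" and H0: "moeb H (fin 0) = q1"
    and HI: "moeb H Inf = q2" and H1: "moeb H (fin 1) = q3"
    using G H by (simp_all add: frame_map_def)
  obtain H' where H': "qinvertible H'" "\<And>x. moeb H' (moeb H x) = x"
    using qinvertible_inverse_mobius[OF iH] by metis
  define M where "M = qmatrix_mult G (qmatrix_mult (conj_qm a) H')"
  have "qinvertible M" unfolding M_def by (intro qinvertible_mult iG qinvertible_conj_qm a H'(1))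
  moreover have mM: "moeb M y = moeb G (moeb (conj_qm a) (moeb H' y))" for y
    unfolding M_def mobius_mult[OF qinvertible_mult[OF qinvertible_conj_qm[OF a] H'(1)]]
      mobius_mult[OF H'(1)] ..
  ultimately show ?thesis
    using that[of M] G0 GI G1 H'(2) a by (simp add: mM mobius_conj_qm(1)[OF a] mobius_conj_qm(2) flip: H0 HI H1)
qed

lemma mobius_solutions_eq_conj_orbit:
  assumes G: "frame_map G p1 p2 p3" and H: "frame_map H q1 q2 q3" and q4: "q4 = moeb H (fin w)"
  shows "{mobius g q4 | g. g \<in> GL2H \<and> mobius g q1 = p1 \<and> mobius g q2 = p2 \<and> mobius g q3 = p3} =
    moeb G ` fin ` conj_orbit w" (is "?S = _")
proof (intro equalityI subsetI)
  fix x assume "x \<in> ?S"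
  then obtain g where g: "x = mobius g q4" "g \<in> GL2H" "mobius g q1 = p1" "mobius g q2 = p2"
    "mobius g q3 = p3"
    by blast
  obtain M where M: "g = qmat_of M" by (rule qmat_of_cases)
  have "moeb M (moeb H (fin w)) \<in> moeb G ` fin ` conj_orbit w"
    using g M by (intro mobius_fixing_frame_mem_conj_orbit[OF G H]) (simp_all add: qmat_of_in_GL2H_iff)
  then show "x \<in> moeb G ` fin ` conj_orbit w" using g(1) M q4 by simp
next
  fix x assume "x \<in> moeb G ` fin ` conj_orbit w"
  then obtain a where a: "a \<noteq> 0" "x = moeb G (fin (a * w * inverse a))" by (auto simp: conj_orbit_def)
  obtain M where M: "qinvertible M" "moeb M q1 = p1" "moeb M q2 = p2" "moeb M q3 = p3"
    "moeb M (moeb H (fin w)) = moeb G (fin (a * w * inverse a))"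
    using mobius_fixing_frame_through_conj_orbit[OF G H a(1)] .
  have "qmat_of M \<in> GL2H" using M(1) by (simp add: qmat_of_in_GL2H_iff)
  moreover have "x = moeb M q4" using M(5) a(2) q4 by simp
  ultimately show "x \<in> ?S" using M(2-4) by blast
qed

lemma conj_orbit_image_sphere_or_plane:
  assumes G: "frame_map G p1 p2 p3" and w: "w \<notin> \<real>"
  defines "S \<equiv> moeb G ` fin ` conj_orbit w"
  shows "is_2sphere S \<or> is_2plane S" and "\<nexists>p. S = {p}"
proof -
  have "fin ` conj_orbit w = Fin ` (to_quat ` conj_orbit w)" by (auto simp: fin_def image_image)
  moreover have "to_quat w \<in> to_quat ` conj_orbit w" "to_quat (qcnj w) \<in> to_quat ` conj_orbit w"
    using self_in_conj_orbit qcnj_in_conj_orbit by blast+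
  moreover have "to_quat w \<noteq> to_quat (qcnj w)" using w by (metis qcnj_eq_iff_Reals to_quat_inject')
  ultimately show "is_2sphere S \<or> is_2plane S"
    using G codim2_sphere_conj_orbit[OF w] unfolding S_def frame_map_def by metis
  obtain G' where "\<And>x. moeb G' (moeb G x) = x"
    using G qinvertible_inverse_mobius unfolding frame_map_def by metis
  then have "moeb G (fin w) \<noteq> moeb G (fin (qcnj w))" using w by (metis fin_eq_iff qcnj_eq_iff_Reals)
  moreover have "moeb G (fin w) \<in> S" "moeb G (fin (qcnj w)) \<in> S"
    unfolding S_def using self_in_conj_orbit qcnj_in_conj_orbit by blast+
  ultimately show "\<nexists>p. S = {p}" by auto
qed

theorem mainTheorem2:
  fixes q1 q2 q3 q4 p1 p2 p3 :: hq
  assumes "distinct [q1, q2, q3, q4]" and "distinct [p1, p2, p3]"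
  defines "S \<equiv> {mobius g q4 | g. g \<in> GL2H \<and> mobius g q1 = p1 \<and> mobius g q2 = p2 \<and> mobius g q3 = p3}"
  shows "(is_2sphere S \<or> is_2plane S \<or> (\<exists>p. S = {p}))
         \<and> ((\<exists>p. S = {p}) \<longleftrightarrow> is_real_quat (crossratio q1 q2 q3 q4))"
proof -
  obtain G where G: "frame_map G p1 p2 p3" using exists_frame_map[OF assms(2)] .
  have "distinct [q1, q2, q3]" using assms(1) by auto
  then obtain H where H: "frame_map H q1 q2 q3" by (rule exists_frame_map)
  obtain w where w: "w \<noteq> 0" "w \<noteq> 1" "q4 = moeb H (fin w)"
    using frame_map_preimage[OF H, of q4] assms(1) by auto
  have S: "S = moeb G ` fin ` conj_orbit w"
    unfolding S_def by (rule mobius_solutions_eq_conj_orbit[OF G H w(3)])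
  have "is_real_quat (crossratio q1 q2 q3 q4) \<longleftrightarrow> w \<in> \<real>"
    using H w by (simp add: frame_map_def is_real_quat_iff_Reals mult_inverse_diff_one_in_Reals_iff)
  moreover have "w \<in> \<real> \<Longrightarrow> S = {moeb G (fin w)}" by (simp add: S conj_orbit_Reals)
  ultimately show ?thesis
    using conj_orbit_image_sphere_or_plane[OF G, of w] by (auto simp: S)
qed

end
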